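(* Let $\beta$ be any online throttling strategy (specified for every horizon $T$). For any $\mu>\rho/\bar v$, \[\liminf_{T\to\infty,\ B=\rho T}\ \inf_{\bm v,\,G}\ \frac1T\,\mathbb E_{\bm p\sim G^T,\ \bm\gamma}\Big[R^\beta(\bm v,\bm p,\bm\gamma)-\mu\cdot R^{\mathrm{H}}(\bm v,\bm p)\Big]<0,\] where the infimum is over value sequences $\bm v\in[0,\bar v]^T$ and distributions $G$ on $[0,\bar v]$.
   Context: Repeated second-price auctions with a single budget-constrained buyer. Constants $\bar v>0$ and $\rho\in(0,\bar v]$. There are $T$ rounds and total budget $B=\rho T$. In round $t$ the buyer has value $v_t\in[0,\bar v]$ (here an arbitrary, adversarially chosen sequence $\bm v=(v_t)$), and the highest competing bid $p_t$ is drawn i.i.d. from a distribution $G$ on $[0,\bar v]$ unknown to the buyer. After seeing $v_t$ the buyer chooses $x_t\in\{0,1\}$ and obtains revenue $x_tr_t$ and pays $x_tc_t$, with $r_t=(v_t-p_t)^+$, $c_t=p_t\mathbf 1[v_t\ge p_t]$. An online throttling strategy sets $x_t=\beta_t(\mathcal H_t,v_t,\gamma_t)$ with internal randomness $\gamma_t$ and history $\mathcal H_t=(v_\tau,x_\tau,p_\tau)_{\tau<t}$ (full information) or $(v_\tau,x_\tau,x_\tau p_\tau)_{\tau<t}$ (partial information); total payment must stay within $B$. With $T_0$ the last round with $x_t=1$, the total revenue is $R^\beta(\bm v,\bm p,\bm\gamma)=\sum_{t=1}^{T_0}x_tr_t$. The hindsight benchmark is $R^{\mathrm H}(\bm v,\bm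 p)=\max_{\bm x\in\{0,1\}^T}\sum_{t=1}^Tx_t(v_t-p_t)^+$ subject to $\sum_{t=1}^Tx_tp_t\mathbf 1[v_t\ge p_t]\le T\rho$. *)

theory Defs
  imports "HOL-Probability.Probability"
begin

text \<open>Rounds are indexed 0,...,T-1. A (full-information) online throttling strategy, specified
for every horizon T, is a function
  beta T t vhist xhist phist v_t gamma_t
returning the decision x_t. The histories are passed truncated to rounds < t, so the
strategy is non-anticipating by construction.\<close>

type_synonym strategy =
  "nat \<Rightarrow> nat \<Rightarrow> (nat \<Rightarrow> real) \<Rightarrow> (nat \<Rightarrow> bool) \<Rightarrow> (nat \<Rightarrow> real) \<Rightarrow> real \<Rightarrow> real \<Rightarrow> bool"

definition trunc :: "nat \<Rightarrow> (nat \<Rightarrow> real) \<Rightarrow> nat \<Rightarrow> real" where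
  "trunc n f = (\<lambda>\<tau>. if \<tau> < n then f \<tau> else 0)"

primrec xhist :: "strategy \<Rightarrow> nat \<Rightarrow> (nat \<Rightarrow> real) \<Rightarrow> (nat \<Rightarrow> real) \<Rightarrow> (nat \<Rightarrow> real) \<Rightarrow> nat \<Rightarrow> nat \<Rightarrow> bool" where
  "xhist \<beta> T v p \<gamma> 0 = (\<lambda>_. False)"
| "xhist \<beta> T v p \<gamma> (Suc n) =
     (let h = xhist \<beta> T v p \<gamma> n
      in h(n := \<beta> T n (trunc n v) h (trunc n p) (v n) (\<gamma> n)))"

definition decision :: "strategy \<Rightarrow> nat \<Rightarrow> (nat \<Rightarrow> real) \<Rightarrow> (nat \<Rightarrow> real) \<Rightarrow> (nat \<Rightarrow> real) \<Rightarrow> nat \<Rightarrow> bool" where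
  "decision \<beta> T v p \<gamma> = xhist \<beta> T v p \<gamma> T"

definition gain :: "real \<Rightarrow> real \<Rightarrow> real" where
  "gain v p = max (v - p) 0"

definition cost :: "real \<Rightarrow> real \<Rightarrow> real" where
  "cost v p = (if v \<ge> p then p else 0)"

definition revenue :: "strategy \<Rightarrow> nat \<Rightarrow> (nat \<Rightarrow> real) \<Rightarrow> (nat \<Rightarrow> real) \<Rightarrow> (nat \<Rightarrow> real) \<Rightarrow> real" where
  "revenue \<beta> T v p \<gamma> = (\<Sum>t<T. if decision \<beta> T v p \<gamma> t then gain (v t) (p t) else 0)"

definition payment :: "strategy \<Rightarrow> nat \<Rightarrow> (nat \<Rightarrow> real) \<Rightarrow> (nat \<Rightarrow> real) \<Rightarrow> (nat \<Rightarrow> real) \<Rightarrow> real" where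
  "payment \<beta> T v p \<gamma> = (\<Sum>t<T. if decision \<beta> T v p \<gamma> t then cost (v t) (p t) else 0)"

text \<open>Hindsight benchmark: x in {0,1}^T represented by the set S of rounds with x_t = 1.\<close>
definition hindsight :: "real \<Rightarrow> nat \<Rightarrow> (nat \<Rightarrow> real) \<Rightarrow> (nat \<Rightarrow> real) \<Rightarrow> real" where
  "hindsight \<rho> T v p = Max {(\<Sum>t\<in>S. gain (v t) (p t)) | S. S \<subseteq> {..<T} \<and> (\<Sum>t\<in>S. cost (v t) (p t)) \<le> real T * \<rho>}"

definition distr_on :: "real \<Rightarrow> real measure \<Rightarrow> bool" where
  "distr_on vbar G \<longleftrightarrow> prob_space G \<and> sets G = sets borel \<and> emeasure G {0..vbar} = 1"

definition budget_feasible :: "real \<Rightarrow> real \<Rightarrow> strategy \<Rightarrow> bool" where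
  "budget_feasible vbar \<rho> \<beta> \<longleftrightarrow>
     (\<forall>T v p \<gamma>. (\<forall>t<T. v t \<in> {0..vbar}) \<longrightarrow> (\<forall>t<T. p t \<in> {0..vbar}) \<longrightarrow>
        payment \<beta> T v p \<gamma> \<le> \<rho> * real T)"

text \<open>Probability space of (p, gamma): p ~ G^T i.i.d., gamma_t i.i.d. ~ Gam T (strategy's
internal randomness), independent.\<close>
definition outcome_space :: "nat \<Rightarrow> real measure \<Rightarrow> real measure \<Rightarrow> ((nat \<Rightarrow> real) \<times> (nat \<Rightarrow> real)) measure" where
  "outcome_space T G Gam = (PiM {..<T} (\<lambda>_. G)) \<Otimes>\<^sub>M (PiM {..<T} (\<lambda>_. Gam))"

definition measurable_strategy :: "strategy \<Rightarrow> (nat \<Rightarrow> real measure) \<Rightarrow> bool" where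
  "measurable_strategy \<beta> Gam \<longleftrightarrow>
     (\<forall>T v t. t < T \<longrightarrow>
        (\<lambda>\<omega>. decision \<beta> T v (fst \<omega>) (snd \<omega>) t)
          \<in> measurable (outcome_space T borel (Gam T)) (count_space UNIV))"

definition objective :: "real \<Rightarrow> real \<Rightarrow> strategy \<Rightarrow> (nat \<Rightarrow> real measure) \<Rightarrow> nat \<Rightarrow> (nat \<Rightarrow> real) \<Rightarrow> real measure \<Rightarrow> real" where
  "objective \<rho> \<mu> \<beta> Gam T v G =
     (1 / real T) * (\<integral>\<omega>. revenue \<beta> T v (fst \<omega>) (snd \<omega>) - \<mu> * hindsight \<rho> T v (fst \<omega>)
                          \<partial>(outcome_space T G (Gam T)))"

definition worst_case :: "real \<Rightarrow> real \<Rightarrow> real \<Rightarrow> strategy \<Rightarrow> (nat \<Rightarrow> real measure) \<Rightarrow> nat \<Rightarrow> real" where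
  "worst_case vbar \<rho> \<mu> \<beta> Gam T =
     (INF vG \<in> {(v, G). (\<forall>t<T. v t \<in> {0..vbar}) \<and> distr_on vbar G}.
        objective \<rho> \<mu> \<beta> Gam T (fst vG) (snd vG))"

end

theory Submission
  imports Defs
begin

text \<open>Let the values be constantly vbar and the prices i.i.d., equal to 0 with probability q and
  to vbar otherwise. The decision in round t depends only on earlier prices, hence is independent
  of the price in round t. So if the buyer enters N rounds in expectation, it earns vbar q N and
  pays vbar (1 - q) N, which the budget bounds by \<rho> T; the hindsight optimum instead takes all
  free rounds and earns vbar q T. The normalised objective is therefore at most
  q (\<rho> / (1 - q) - \<mu> vbar), which is negative for a suitable q \<in> (0, 1) as soon as
  \<mu> vbar > \<rho>.\<close>

lemma PiM_integral_mult_indep_coord: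
  fixes G :: "real measure" and g \<phi> :: "_ \<Rightarrow> real"
  assumes G: "prob_space G" and I: "finite I" "t \<in> I"
    and g: "g \<in> borel_measurable (PiM I (\<lambda>_. G))" "\<And>x. \<bar>g x\<bar> \<le> B"
    and \<phi>: "\<phi> \<in> borel_measurable G" "\<And>y. \<bar>\<phi> y\<bar> \<le> C"
    and indep: "\<And>x y y'. g (x(t := y)) = g (x(t := y'))"
  shows "(\<integral>x. g x * \<phi> (x t) \<partial>PiM I (\<lambda>_. G)) = (\<integral>y. \<phi> y \<partial>G) * (\<integral>x. g x \<partial>PiM I (\<lambda>_. G))"
proof -
  interpret G: prob_space G by fact
  interpret P: product_sigma_finite "\<lambda>_. G"
    by (simp add: product_sigma_finite_def G.sigma_finite_measure_axioms)
  interpret PP: prob_space "PiM I (\<lambda>_. G)"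
    by (intro prob_space_PiM) (simp add: G)
  have I_eq: "insert t (I - {t}) = I" using I by auto
  have I': "finite (I - {t})" "t \<notin> I - {t}" using I by auto
  have [measurable]: "(\<lambda>x. x t) \<in> measurable (PiM I (\<lambda>_. G)) G" using I by measurable
  have int_g\<phi>: "integrable (PiM I (\<lambda>_. G)) (\<lambda>x. g x * \<phi> (x t))"
  proof (rule PP.integrable_const_bound[where B = "B * C"])
    show "AE x in PiM I (\<lambda>_. G). norm (g x * \<phi> (x t)) \<le> B * C"
      using g \<phi> by (auto simp: abs_mult intro!: mult_mono order.trans[OF abs_ge_zero g(2)])
  qed (use g \<phi> in measurable)
  have int_g: "integrable (PiM I (\<lambda>_. G)) g"
    using g by (intro PP.integrable_const_bound[where B = B]) auto
  define g\<^sub>0 where "g\<^sub>0 x = g (x(t := 0))" for x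
  have g_upd: "g (x(t := y)) = g\<^sub>0 x" for x y
    unfolding g\<^sub>0_def by (rule indep)
  have "(\<integral>x. g x * \<phi> (x t) \<partial>PiM I (\<lambda>_. G))
      = (\<integral>x. (\<integral>y. g (x(t := y)) * \<phi> y \<partial>G) \<partial>PiM (I - {t}) (\<lambda>_. G))"
    using P.product_integral_insert[OF I', of "\<lambda>x. g x * \<phi> (x t)"] int_g\<phi> I_eq by simp
  also have "\<dots> = (\<integral>y. \<phi> y \<partial>G) * (\<integral>x. g\<^sub>0 x \<partial>PiM (I - {t}) (\<lambda>_. G))"
    by (simp add: g_upd mult.commute)
  also have "(\<integral>x. g\<^sub>0 x \<partial>PiM (I - {t}) (\<lambda>_. G))
      = (\<integral>x. (\<integral>y. g (x(t := y)) \<partial>G) \<partial>PiM (I - {t}) (\<lambda>_. G))"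
    by (simp add: g_upd G.prob_space)
  also have "\<dots> = (\<integral>x. g x \<partial>PiM I (\<lambda>_. G))"
    using P.product_integral_insert[OF I', of g] int_g I_eq by simp
  finally show ?thesis .
qed

lemma pair_PiM_integral_mult_indep_coord:
  fixes G :: "real measure" and C :: "'c measure" and h :: "_ \<Rightarrow> real" and \<phi> :: "real \<Rightarrow> real"
  assumes G: "prob_space G" and C: "prob_space C" and I: "finite I" "t \<in> I"
    and h: "h \<in> borel_measurable (PiM I (\<lambda>_. G) \<Otimes>\<^sub>M C)" "\<And>\<omega>. \<bar>h \<omega>\<bar> \<le> B"
    and \<phi>: "\<phi> \<in> borel_measurable G" "\<And>y. \<bar>\<phi> y\<bar> \<le> D"
    and indep: "\<And>x y y' c. h (x(t := y), c) = h (x(t := y'), c)"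
  shows "(\<integral>\<omega>. h \<omega> * \<phi> (fst \<omega> t) \<partial>(PiM I (\<lambda>_. G) \<Otimes>\<^sub>M C))
       = (\<integral>y. \<phi> y \<partial>G) * (\<integral>\<omega>. h \<omega> \<partial>(PiM I (\<lambda>_. G) \<Otimes>\<^sub>M C))"
proof -
  interpret C: prob_space C by fact
  interpret PP: prob_space "PiM I (\<lambda>_. G)"
    by (intro prob_space_PiM) (simp add: G)
  interpret PC: pair_sigma_finite "PiM I (\<lambda>_. G)" C
    by (simp add: pair_sigma_finite_def PP.sigma_finite_measure_axioms C.sigma_finite_measure_axioms)
  interpret PCp: prob_space "PiM I (\<lambda>_. G) \<Otimes>\<^sub>M C"
    by (intro prob_space_pair) (simp_all add: PP.prob_space_axioms C)
  have [measurable]: "(\<lambda>x. x t) \<in> measurable (PiM I (\<lambda>_. G)) G" using I by measurable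
  note [measurable] = h(1) \<phi>(1)
  have int_h\<phi>: "integrable (PiM I (\<lambda>_. G) \<Otimes>\<^sub>M C) (\<lambda>\<omega>. h \<omega> * \<phi> (fst \<omega> t))"
  proof (rule PCp.integrable_const_bound[where B = "B * D"])
    show "AE x in PiM I (\<lambda>_. G) \<Otimes>\<^sub>M C. norm (h x * \<phi> (fst x t)) \<le> B * D"
      using h \<phi> by (auto simp: abs_mult intro!: mult_mono order.trans[OF abs_ge_zero h(2)])
  qed measurable
  have int_h: "integrable (PiM I (\<lambda>_. G) \<Otimes>\<^sub>M C) h"
    using h by (intro PCp.integrable_const_bound[where B = B]) auto
  define g where "g x = (\<integral>c. h (x, c) \<partial>C)" for x
  have g_meas: "g \<in> borel_measurable (PiM I (\<lambda>_. G))"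
    unfolding g_def by (rule C.borel_measurable_lebesgue_integral) simp
  have g_bound: "\<bar>g x\<bar> \<le> B" for x
  proof (cases "integrable C (\<lambda>c. h (x, c))")
    case True
    have "\<bar>g x\<bar> \<le> (\<integral>c. \<bar>h (x, c)\<bar> \<partial>C)"
      unfolding g_def using integral_norm_bound[of C "\<lambda>c. h (x, c)"] by simp
    also have "\<dots> \<le> B"
      by (rule C.integral_le_const) (use h True in auto)
    finally show ?thesis .
  next
    case False
    then show ?thesis using h(2)[of "(x, undefined)"] by (simp add: g_def not_integrable_integral_eq)
  qed
  have g_indep: "g (x(t := y)) = g (x(t := y'))" for x y y'
    unfolding g_def by (intro Bochner_Integration.integral_cong refl indep)
  have "(\<integral>\<omega>. h \<omega> * \<phi> (fst \<omega> t) \<partial>(PiM I (\<lambda>_. G) \<Otimes>\<^sub>M C))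
      = (\<integral>x. g x * \<phi> (x t) \<partial>PiM I (\<lambda>_. G))"
    using PC.integral_fst'[OF int_h\<phi>] by (simp add: g_def)
  also have "\<dots> = (\<integral>y. \<phi> y \<partial>G) * (\<integral>x. g x \<partial>PiM I (\<lambda>_. G))"
    by (rule PiM_integral_mult_indep_coord[OF G I g_meas g_bound \<phi> g_indep])
  also have "(\<integral>x. g x \<partial>PiM I (\<lambda>_. G)) = (\<integral>\<omega>. h \<omega> \<partial>(PiM I (\<lambda>_. G) \<Otimes>\<^sub>M C))"
    unfolding g_def using PC.integral_fst'[OF int_h] by simp
  finally show ?thesis .
qed

lemma xhist_Suc_cong_prices:
  "\<forall>\<tau><n. p \<tau> = p' \<tau> \<Longrightarrow> xhist \<beta> T v p \<gamma> (Suc n) = xhist \<beta> T v p' \<gamma> (Suc n)"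
proof (induction n)
  case 0
  then show ?case by (simp add: trunc_def)
next
  case (Suc n)
  then have "trunc (Suc n) p = trunc (Suc n) p'" "xhist \<beta> T v p \<gamma> (Suc n) = xhist \<beta> T v p' \<gamma> (Suc n)"
    by (auto simp: trunc_def)
  then show ?case
    unfolding xhist.simps(2)[of \<beta> T v _ \<gamma> "Suc n"] Let_def by (simp only:)
qed

lemma xhist_stable: "t < m \<Longrightarrow> xhist \<beta> T v p \<gamma> m t = xhist \<beta> T v p \<gamma> (Suc t) t"
  by (induction m) (auto simp: Let_def less_Suc_eq)

lemma decision_cong_prices:
  assumes "t < T" "\<forall>\<tau><t. p \<tau> = p' \<tau>"
  shows "decision \<beta> T v p \<gamma> t = decision \<beta> T v p' \<gamma> t"
  using assms xhist_Suc_cong_prices[OF assms(2)] by (simp add: decision_def xhist_stable)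

lemma sum_gain_le_hindsight:
  assumes "S \<subseteq> {..<T}" "(\<Sum>t\<in>S. cost (v t) (p t)) \<le> real T * \<rho>"
  shows "(\<Sum>t\<in>S. gain (v t) (p t)) \<le> hindsight \<rho> T v p"
proof -
  have "finite {(\<Sum>t\<in>S. gain (v t) (p t)) | S. S \<subseteq> {..<T} \<and> (\<Sum>t\<in>S. cost (v t) (p t)) \<le> real T * \<rho>}"
    by (rule finite_subset[of _ "(\<lambda>S. \<Sum>t\<in>S. gain (v t) (p t)) ` Pow {..<T}"]) auto
  then show ?thesis
    unfolding hindsight_def using assms by (intro Max_ge) auto
qed

lemma hindsight_le_sum_gain:
  assumes "\<rho> \<ge> 0"
  shows "hindsight \<rho> T v p \<le> (\<Sum>t<T. gain (v t) (p t))"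
proof -
  let ?A = "{(\<Sum>t\<in>S. gain (v t) (p t)) | S. S \<subseteq> {..<T} \<and> (\<Sum>t\<in>S. cost (v t) (p t)) \<le> real T * \<rho>}"
  have "finite ?A"
    by (rule finite_subset[of _ "(\<lambda>S. \<Sum>t\<in>S. gain (v t) (p t)) ` Pow {..<T}"]) auto
  moreover have "?A \<noteq> {}"
    using assms by (auto intro!: exI[of _ "{}"])
  moreover have "(\<Sum>t\<in>S. gain (v t) (p t)) \<le> (\<Sum>t<T. gain (v t) (p t))" if "S \<subseteq> {..<T}" for S
    using that by (intro sum_mono2) (auto simp: gain_def)
  ultimately show ?thesis
    unfolding hindsight_def by (intro Max.boundedI) auto
qed

lemma hindsight_eq_sum_gain:
  assumes "\<rho> \<ge> 0" and "\<forall>t<T. cost (v t) (p t) = 0 \<or> gain (v t) (p t) = 0"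
  shows "hindsight \<rho> T v p = (\<Sum>t<T. gain (v t) (p t))"
proof (rule antisym)
  let ?S = "{t. t < T \<and> cost (v t) (p t) = 0}"
  have "(\<Sum>t<T. gain (v t) (p t)) = (\<Sum>t\<in>?S. gain (v t) (p t))"
    using assms(2) by (intro sum.mono_neutral_right) auto
  also have "\<dots> \<le> hindsight \<rho> T v p"
    using assms(1) by (intro sum_gain_le_hindsight) auto
  finally show "(\<Sum>t<T. gain (v t) (p t)) \<le> hindsight \<rho> T v p" .
qed (rule hindsight_le_sum_gain[OF assms(1)])

lemma hindsight_eq_Max_Pow:
  assumes "\<rho> \<ge> 0"
  shows "hindsight \<rho> T v p =
    Max ((\<lambda>S. if (\<Sum>t\<in>S. cost (v t) (p t)) \<le> real T * \<rho> then \<Sum>t\<in>S. gain (v t) (p t) else 0) ` Pow {..<T})"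
    (is "_ = Max (?F ` _)")
proof (rule antisym)
  show "hindsight \<rho> T v p \<le> Max (?F ` Pow {..<T})"
    unfolding hindsight_def by (intro Max_mono) (auto intro: exI[of _ "{}"] simp: assms)
  show "Max (?F ` Pow {..<T}) \<le> hindsight \<rho> T v p"
  proof (rule Max.boundedI)
    fix y assume "y \<in> ?F ` Pow {..<T}"
    then obtain S where "S \<subseteq> {..<T}" "y = ?F S" by auto
    moreover have "0 \<le> hindsight \<rho> T v p"
      using sum_gain_le_hindsight[of "{}"] assms by simp
    ultimately show "y \<le> hindsight \<rho> T v p"
      using sum_gain_le_hindsight by (auto split: if_splits)
  qed auto
qed

lemma borel_measurable_hindsight:
  assumes "\<rho> \<ge> 0" and [measurable]: "\<And>t. (\<lambda>\<omega>. p \<omega> t) \<in> borel_measurable M"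
  shows "(\<lambda>\<omega>. hindsight \<rho> T v (p \<omega>)) \<in> borel_measurable M"
  unfolding hindsight_eq_Max_Pow[OF assms(1)] gain_def cost_def
  by (rule borel_measurable_Max) measurable

lemma revenue_minus_hindsight_ge:
  assumes "\<rho> \<ge> 0" "\<mu> \<ge> 0" "\<forall>t<T. v t \<in> {0..vbar}" "\<forall>t<T. p t \<in> {0..vbar}"
  shows "- (\<mu> * (real T * vbar)) \<le> revenue \<beta> T v p \<gamma> - \<mu> * hindsight \<rho> T v p"
proof -
  have "hindsight \<rho> T v p \<le> (\<Sum>t<T. gain (v t) (p t))"
    by (rule hindsight_le_sum_gain[OF assms(1)])
  also have "\<dots> \<le> (\<Sum>t<T. vbar)"
    using assms(3,4) by (intro sum_mono) (force simp: gain_def)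
  finally have "\<mu> * hindsight \<rho> T v p \<le> \<mu> * (real T * vbar)"
    using assms(2) by (simp add: mult_left_mono)
  moreover have "0 \<le> revenue \<beta> T v p \<gamma>"
    unfolding revenue_def by (intro sum_nonneg) (simp add: gain_def)
  ultimately show ?thesis by linarith
qed

lemma prob_space_outcome_space:
  "prob_space G \<Longrightarrow> prob_space Gam \<Longrightarrow> prob_space (outcome_space T G Gam)"
  unfolding outcome_space_def by (intro prob_space_pair prob_space_PiM) auto

lemma sets_outcome_space_cong:
  "sets G = sets G' \<Longrightarrow> sets (outcome_space T G Gam) = sets (outcome_space T G' Gam)"
  unfolding outcome_space_def by (intro sets_pair_measure_cong sets_PiM_cong) auto

text \<open>Coordinates t \<ge> T of the price vector are undefined on the space, hence constant there.\<close>
lemma borel_measurable_price: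
  assumes "sets G = sets borel"
  shows "(\<lambda>\<omega>. fst \<omega> t) \<in> borel_measurable (outcome_space T G Gam)"
proof (cases "t < T")
  case True
  then have "(\<lambda>\<omega>. fst \<omega> t) \<in> borel_measurable (outcome_space T borel Gam)"
    unfolding outcome_space_def
    by (intro measurable_compose[OF measurable_fst] measurable_component_singleton) simp
  then show ?thesis
    using measurable_cong_sets[OF sets_outcome_space_cong[OF assms] refl] by blast
next
  case False
  then have "(\<lambda>\<omega>. fst \<omega> t) \<in> borel_measurable (outcome_space T G Gam)
      \<longleftrightarrow> (\<lambda>_. undefined :: real) \<in> borel_measurable (outcome_space T G Gam)"
    by (intro Sigma_Algebra.measurable_cong)
       (auto simp: outcome_space_def space_pair_measure space_PiM PiE_def extensional_def not_less)
  then show ?thesis by simp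
qed

lemma measurable_decision:
  assumes "measurable_strategy \<beta> Gam" "sets G = sets borel" "t < T"
  shows "(\<lambda>\<omega>. decision \<beta> T v (fst \<omega>) (snd \<omega>) t) \<in> measurable (outcome_space T G (Gam T)) (count_space UNIV)"
  using assms measurable_cong_sets[OF sets_outcome_space_cong[OF assms(2)] refl]
  unfolding measurable_strategy_def by blast

lemma borel_measurable_sum_decisions:
  fixes f :: "nat \<Rightarrow> real \<Rightarrow> real"
  assumes "measurable_strategy \<beta> Gam" "sets G = sets borel" "\<And>t. f t \<in> borel_measurable borel"
  shows "(\<lambda>\<omega>. \<Sum>t<T. if decision \<beta> T v (fst \<omega>) (snd \<omega>) t then f t (fst \<omega> t) else 0)
    \<in> borel_measurable (outcome_space T G (Gam T))"
proof (rule borel_measurable_sum)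
  fix t assume "t \<in> {..<T}"
  note [measurable] = measurable_decision[OF assms(1,2), of t] borel_measurable_price[OF assms(2)]
    measurable_compose[OF _ assms(3)]
  show "(\<lambda>\<omega>. if decision \<beta> T v (fst \<omega>) (snd \<omega>) t then f t (fst \<omega> t) else 0)
    \<in> borel_measurable (outcome_space T G (Gam T))"
    using \<open>t \<in> {..<T}\<close> by simp measurable
qed

lemma AE_outcome_space_prices:
  assumes G: "prob_space G" and Gam: "prob_space Gam" and A: "A \<in> sets G" "AE x in G. x \<in> A"
  shows "AE \<omega> in outcome_space T G Gam. \<forall>t<T. fst \<omega> t \<in> A"
proof -
  interpret Gam: prob_space "PiM {..<T} (\<lambda>_. Gam)"
    by (intro prob_space_PiM) (simp add: Gam)
  have "AE x in PiM {..<T} (\<lambda>_. G). \<forall>t\<in>{..<T}. x t \<in> A"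
    by (rule AE_finite_allI) (auto intro!: AE_PiM_component G A)
  then have "AE x in distr (outcome_space T G Gam) (PiM {..<T} (\<lambda>_. G)) fst. \<forall>t<T. x t \<in> A"
    unfolding outcome_space_def Gam.distr_pair_fst by (rule eventually_mono) simp
  from AE_distrD[OF _ this] show ?thesis
    unfolding outcome_space_def by simp
qed

lemma has_bochner_integral_decision_mult_price:
  fixes \<phi> :: "real \<Rightarrow> real"
  assumes G: "prob_space G" "sets G = sets borel" and Gam: "prob_space (Gam T)"
    and \<beta>: "measurable_strategy \<beta> Gam" and t: "t < T"
    and \<phi>: "\<phi> \<in> borel_measurable borel" "\<And>y. \<bar>\<phi> y\<bar> \<le> K"
  shows "has_bochner_integral (outcome_space T G (Gam T))
    (\<lambda>\<omega>. of_bool (decision \<beta> T v (fst \<omega>) (snd \<omega>) t) * \<phi> (fst \<omega> t))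
    ((\<integral>y. \<phi> y \<partial>G) * (\<integral>\<omega>. of_bool (decision \<beta> T v (fst \<omega>) (snd \<omega>) t) \<partial>outcome_space T G (Gam T)))"
proof -
  interpret prob_space "outcome_space T G (Gam T)"
    by (intro prob_space_outcome_space G Gam)
  note [measurable] = measurable_decision[OF \<beta> G(2) t, of v] borel_measurable_price[OF G(2)]
    measurable_compose[OF _ \<phi>(1)]
  have int: "integrable (outcome_space T G (Gam T))
      (\<lambda>\<omega>. of_bool (decision \<beta> T v (fst \<omega>) (snd \<omega>) t) * \<phi> (fst \<omega> t))"
    using \<phi>(2) order_trans[OF abs_ge_zero \<phi>(2)] by (intro integrable_const_bound[where B = K]) auto
  have indep: "decision \<beta> T v (x(t := y)) c t = decision \<beta> T v (x(t := y')) c t" for x y y' c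
    by (rule decision_cong_prices[OF t]) simp
  have "\<phi> \<in> borel_measurable G"
    using \<phi>(1) measurable_cong_sets[OF G(2) refl] by blast
  then have "(\<integral>\<omega>. of_bool (decision \<beta> T v (fst \<omega>) (snd \<omega>) t) * \<phi> (fst \<omega> t) \<partial>outcome_space T G (Gam T))
      = (\<integral>y. \<phi> y \<partial>G) * (\<integral>\<omega>. of_bool (decision \<beta> T v (fst \<omega>) (snd \<omega>) t) \<partial>outcome_space T G (Gam T))"
    unfolding outcome_space_def using t indep
    by (intro pair_PiM_integral_mult_indep_coord[where B = 1 and D = K] G(1) prob_space_PiM Gam \<phi>(2))
       (auto simp: outcome_space_def[symmetric])
  with int show ?thesis
    by (simp add: has_bochner_integral_iff)
qed

lemma has_bochner_integral_sum_decisions_mult_price: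
  fixes \<phi> :: "real \<Rightarrow> real"
  assumes "prob_space G" "sets G = sets borel" "prob_space (Gam T)" "measurable_strategy \<beta> Gam"
    and "\<phi> \<in> borel_measurable borel" "\<And>y. \<bar>\<phi> y\<bar> \<le> K"
  shows "has_bochner_integral (outcome_space T G (Gam T))
    (\<lambda>\<omega>. \<Sum>t<T. of_bool (decision \<beta> T v (fst \<omega>) (snd \<omega>) t) * \<phi> (fst \<omega> t))
    ((\<integral>y. \<phi> y \<partial>G) * (\<Sum>t<T. \<integral>\<omega>. of_bool (decision \<beta> T v (fst \<omega>) (snd \<omega>) t) \<partial>outcome_space T G (Gam T)))"
  unfolding sum_distrib_left
  by (intro has_bochner_integral_sum has_bochner_integral_decision_mult_price[OF assms(1-4) _ assms(5,6)]) simp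

lemma has_bochner_integral_price:
  fixes \<phi> :: "real \<Rightarrow> real"
  assumes G: "prob_space G" "sets G = sets borel" and Gam: "prob_space Gam" and t: "t < T"
    and \<phi>: "\<phi> \<in> borel_measurable borel" "\<And>y. \<bar>\<phi> y\<bar> \<le> K"
  shows "has_bochner_integral (outcome_space T G Gam) (\<lambda>\<omega>. \<phi> (fst \<omega> t)) (\<integral>y. \<phi> y \<partial>G)"
proof -
  interpret prob_space "outcome_space T G Gam"
    by (intro prob_space_outcome_space G Gam)
  note [measurable] = borel_measurable_price[OF G(2)] measurable_compose[OF _ \<phi>(1)]
  have int: "integrable (outcome_space T G Gam) (\<lambda>\<omega>. \<phi> (fst \<omega> t))"
    using \<phi>(2) by (intro integrable_const_bound[where B = K]) auto
  have "\<phi> \<in> borel_measurable G"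
    using \<phi>(1) measurable_cong_sets[OF G(2) refl] by blast
  then have "(\<integral>\<omega>. 1 * \<phi> (fst \<omega> t) \<partial>outcome_space T G Gam) = (\<integral>y. \<phi> y \<partial>G) * (\<integral>\<omega>. 1 \<partial>outcome_space T G Gam)"
    unfolding outcome_space_def using t
    by (intro pair_PiM_integral_mult_indep_coord[where B = 1 and D = K] G(1) prob_space_PiM Gam \<phi>(2)) auto
  with int show ?thesis
    by (simp add: has_bochner_integral_iff prob_space)
qed

lemma objective_ge:
  assumes "vbar \<ge> 0" "\<rho> \<ge> 0" "\<mu> \<ge> 0" "prob_space (Gam T)" "distr_on vbar G"
    and v: "\<forall>t<T. v t \<in> {0..vbar}"
  shows "- (\<mu> * vbar) \<le> objective \<rho> \<mu> \<beta> Gam T v G"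
proof -
  let ?\<Omega> = "outcome_space T G (Gam T)"
  let ?f = "\<lambda>\<omega>. revenue \<beta> T v (fst \<omega>) (snd \<omega>) - \<mu> * hindsight \<rho> T v (fst \<omega>)"
  have G: "prob_space G" "sets G = sets borel" "emeasure G {0..vbar} = 1"
    using assms(5) by (auto simp: distr_on_def)
  interpret G: prob_space G by fact
  interpret prob_space ?\<Omega>
    by (intro prob_space_outcome_space G assms(4))
  have "AE x in G. x \<in> {0..vbar}"
    using G by (subst G.AE_in_set_eq_1) (auto simp: G.emeasure_eq_measure)
  then have ae: "AE \<omega> in ?\<Omega>. \<forall>t<T. fst \<omega> t \<in> {0..vbar}"
    using G(2) by (intro AE_outcome_space_prices G assms(4)) auto
  have bound: "- (\<mu> * (real T * vbar)) \<le> ?f \<omega>" if "\<forall>t<T. fst \<omega> t \<in> {0..vbar}" for \<omega>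
    using revenue_minus_hindsight_ge[OF assms(2,3) v that] .
  have "- (\<mu> * (real T * vbar)) \<le> (\<integral>\<omega>. ?f \<omega> \<partial>?\<Omega>)"
  proof (cases "integrable ?\<Omega> ?f")
    case True
    then show ?thesis
      by (rule integral_ge_const) (rule eventually_mono[OF ae bound])
  next
    case False
    then show ?thesis
      using assms(1,3) by (simp add: not_integrable_integral_eq)
  qed
  then have "(1 / real T) * - (\<mu> * (real T * vbar)) \<le> objective \<rho> \<mu> \<beta> Gam T v G"
    unfolding objective_def by (rule mult_left_mono) simp
  then show ?thesis
    using assms(1,3) by (cases "T = 0") (auto simp: objective_def)
qed

definition two_point_prices :: "real \<Rightarrow> real \<Rightarrow> real measure" where
  "two_point_prices q vbar = distr (measure_pmf (bernoulli_pmf q)) borel (\<lambda>b. if b then 0 else vbar)"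

lemma sets_two_point_prices [simp]: "sets (two_point_prices q vbar) = sets borel"
  by (simp add: two_point_prices_def)

lemma prob_space_two_point_prices: "prob_space (two_point_prices q vbar)"
  unfolding two_point_prices_def by (rule measure_pmf.prob_space_distr) simp

lemma integral_two_point_prices:
  assumes "0 \<le> q" "q \<le> 1" "\<phi> \<in> borel_measurable borel"
  shows "(\<integral>y. \<phi> y \<partial>two_point_prices q vbar) = q * \<phi> 0 + (1 - q) * \<phi> vbar"
  unfolding two_point_prices_def using assms by (subst integral_distr) auto

lemma AE_two_point_prices: "AE y in two_point_prices q vbar. y \<in> {0, vbar}"
  unfolding two_point_prices_def by (subst AE_distr_iff) auto

lemma distr_on_two_point_prices:
  assumes "vbar \<ge> 0"
  shows "distr_on vbar (two_point_prices q vbar)"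
proof -
  interpret prob_space "two_point_prices q vbar"
    by (rule prob_space_two_point_prices)
  have "AE y in two_point_prices q vbar. y \<in> {0..vbar}"
    using AE_two_point_prices by (rule eventually_mono) (use assms in auto)
  then show ?thesis
    unfolding distr_on_def by (simp add: prob_space_axioms emeasure_eq_measure prob_eq_1)
qed

lemma revenue_const_two_point:
  assumes "vbar > 0" "\<forall>t<T. p t \<in> {0, vbar}"
  shows "revenue \<beta> T (\<lambda>_. vbar) p \<gamma>
    = (\<Sum>t<T. of_bool (decision \<beta> T (\<lambda>_. vbar) p \<gamma> t) * (vbar * indicator {0} (p t)))"
  unfolding revenue_def using assms by (intro sum.cong) (auto simp: gain_def)

lemma payment_const_two_point:
  assumes "vbar > 0" "\<forall>t<T. p t \<in> {0, vbar}"
  shows "payment \<beta> T (\<lambda>_. vbar) p \<gamma>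
    = (\<Sum>t<T. of_bool (decision \<beta> T (\<lambda>_. vbar) p \<gamma> t) * (vbar * indicator {vbar} (p t)))"
  unfolding payment_def using assms by (intro sum.cong) (auto simp: cost_def)

lemma hindsight_const_two_point:
  assumes "vbar > 0" "\<rho> \<ge> 0" "\<forall>t<T. p t \<in> {0, vbar}"
  shows "hindsight \<rho> T (\<lambda>_. vbar) p = (\<Sum>t<T. vbar * indicator {0} (p t))"
proof -
  have "\<forall>t<T. cost vbar (p t) = 0 \<or> gain vbar (p t) = 0"
    using assms(3) by (auto simp: cost_def gain_def)
  then have "hindsight \<rho> T (\<lambda>_. vbar) p = (\<Sum>t<T. gain vbar (p t))"
    using hindsight_eq_sum_gain[OF assms(2)] by simp
  also have "\<dots> = (\<Sum>t<T. vbar * indicator {0} (p t))"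
    using assms(1,3) by (intro sum.cong) (auto simp: gain_def)
  finally show ?thesis .
qed

lemma has_bochner_integral_const_two_point:
  assumes "vbar > 0" "\<rho> \<ge> 0" "0 \<le> q" "q \<le> 1" and Gam: "prob_space (Gam T)"
    and \<beta>: "measurable_strategy \<beta> Gam"
  defines "\<Omega> \<equiv> outcome_space T (two_point_prices q vbar) (Gam T)"
    and "N \<equiv> \<Sum>t<T. \<integral>\<omega>. of_bool (decision \<beta> T (\<lambda>_. vbar) (fst \<omega>) (snd \<omega>) t)
      \<partial>outcome_space T (two_point_prices q vbar) (Gam T)"
  shows "has_bochner_integral \<Omega> (\<lambda>\<omega>. revenue \<beta> T (\<lambda>_. vbar) (fst \<omega>) (snd \<omega>)) (vbar * q * N)"
    and "has_bochner_integral \<Omega> (\<lambda>\<omega>. payment \<beta> T (\<lambda>_. vbar) (fst \<omega>) (snd \<omega>)) (vbar * (1 - q) * N)"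
    and "has_bochner_integral \<Omega> (\<lambda>\<omega>. hindsight \<rho> T (\<lambda>_. vbar) (fst \<omega>)) (vbar * q * real T)"
proof -
  let ?G = "two_point_prices q vbar"
  let ?x = "\<lambda>t \<omega>. of_bool (decision \<beta> T (\<lambda>_. vbar) (fst \<omega>) (snd \<omega>) t) :: real"
  have G: "prob_space ?G" "sets ?G = sets borel"
    by (simp_all add: prob_space_two_point_prices)
  have ae: "AE \<omega> in \<Omega>. \<forall>t<T. fst \<omega> t \<in> {0, vbar}"
    unfolding \<Omega>_def by (intro AE_outcome_space_prices G Gam AE_two_point_prices) simp
  have int_free: "(\<integral>y. vbar * indicator {0} y \<partial>?G) = vbar * q"
    using assms(1,3,4) by (subst integral_two_point_prices) auto
  have int_paid: "(\<integral>y. vbar * indicator {vbar} y \<partial>?G) = vbar * (1 - q)"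
    using assms(1,3,4) by (subst integral_two_point_prices) auto
  have price_meas: "\<And>t. (\<lambda>\<omega>. fst \<omega> t) \<in> borel_measurable \<Omega>"
    unfolding \<Omega>_def by (intro borel_measurable_price G)
  have transfer: "has_bochner_integral \<Omega> f x"
    if "has_bochner_integral \<Omega> g x" "f \<in> borel_measurable \<Omega>" "AE \<omega> in \<Omega>. f \<omega> = g \<omega>" for f g x
    using has_bochner_integral_cong_AE[of f \<Omega> g x] borel_measurable_has_bochner_integral[OF that(1)] that
    by simp
  have sum_x: "has_bochner_integral \<Omega> (\<lambda>\<omega>. \<Sum>t<T. ?x t \<omega> * (vbar * indicator {a} (fst \<omega> t)))
      ((\<integral>y. vbar * indicator {a} y \<partial>?G) * N)" for a
    unfolding \<Omega>_def N_def using assms(1)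
    by (intro has_bochner_integral_sum_decisions_mult_price[OF G Gam \<beta>, where K = vbar]) auto
  show "has_bochner_integral \<Omega> (\<lambda>\<omega>. revenue \<beta> T (\<lambda>_. vbar) (fst \<omega>) (snd \<omega>)) (vbar * q * N)"
  proof (rule transfer[OF sum_x[of 0, unfolded int_free]])
    show "(\<lambda>\<omega>. revenue \<beta> T (\<lambda>_. vbar) (fst \<omega>) (snd \<omega>)) \<in> borel_measurable \<Omega>"
      unfolding revenue_def \<Omega>_def by (rule borel_measurable_sum_decisions[OF \<beta> G(2)]) (simp add: gain_def)
  qed (use ae in \<open>auto elim: eventually_mono simp: revenue_const_two_point[OF assms(1)]\<close>)
  show "has_bochner_integral \<Omega> (\<lambda>\<omega>. payment \<beta> T (\<lambda>_. vbar) (fst \<omega>) (snd \<omega>)) (vbar * (1 - q) * N)"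
  proof (rule transfer[OF sum_x[of vbar, unfolded int_paid]])
    show "(\<lambda>\<omega>. payment \<beta> T (\<lambda>_. vbar) (fst \<omega>) (snd \<omega>)) \<in> borel_measurable \<Omega>"
      unfolding payment_def \<Omega>_def by (rule borel_measurable_sum_decisions[OF \<beta> G(2)]) (simp add: cost_def)
  qed (use ae assms(1) in \<open>auto elim: eventually_mono simp: payment_const_two_point[OF assms(1)]\<close>)
  have "has_bochner_integral \<Omega> (\<lambda>\<omega>. \<Sum>t<T. vbar * indicator {0} (fst \<omega> t)) (\<Sum>t<T. vbar * q)"
    using has_bochner_integral_price[OF G Gam, where K = vbar and \<phi> = "\<lambda>y. vbar * indicator {0} y"]
      int_free assms(1)
    unfolding \<Omega>_def by (intro has_bochner_integral_sum) auto
  then have "has_bochner_integral \<Omega> (\<lambda>\<omega>. \<Sum>t<T. vbar * indicator {0} (fst \<omega> t)) (vbar * q * real T)"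
    by (simp add: mult.commute)
  then show "has_bochner_integral \<Omega> (\<lambda>\<omega>. hindsight \<rho> T (\<lambda>_. vbar) (fst \<omega>)) (vbar * q * real T)"
    by (rule transfer)
       (use ae borel_measurable_hindsight[OF assms(2) price_meas] in
        \<open>auto elim: eventually_mono simp: hindsight_const_two_point[OF assms(1,2)]\<close>)
qed

lemma objective_const_two_point_le:
  assumes "vbar > 0" "\<rho> \<ge> 0" "0 \<le> q" "q < 1" "T > 0" and Gam: "prob_space (Gam T)"
    and \<beta>: "budget_feasible vbar \<rho> \<beta>" "measurable_strategy \<beta> Gam"
  shows "objective \<rho> \<mu> \<beta> Gam T (\<lambda>_. vbar) (two_point_prices q vbar) \<le> q * (\<rho> / (1 - q) - \<mu> * vbar)"
proof -
  let ?G = "two_point_prices q vbar"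
  let ?\<Omega> = "outcome_space T ?G (Gam T)"
  define N :: real
    where "N = (\<Sum>t<T. \<integral>\<omega>. of_bool (decision \<beta> T (\<lambda>_. vbar) (fst \<omega>) (snd \<omega>) t) \<partial>?\<Omega>)"
  note E = has_bochner_integral_const_two_point[OF assms(1-3) less_imp_le[OF assms(4)] Gam \<beta>(2),
      folded N_def]
  interpret prob_space ?\<Omega>
    by (intro prob_space_outcome_space prob_space_two_point_prices Gam)
  have "AE y in ?G. y \<in> {0..vbar}"
    using AE_two_point_prices by (rule eventually_mono) (use assms(1) in auto)
  then have "AE \<omega> in ?\<Omega>. \<forall>t<T. fst \<omega> t \<in> {0..vbar}"
    by (intro AE_outcome_space_prices prob_space_two_point_prices Gam) auto
  then have "AE \<omega> in ?\<Omega>. payment \<beta> T (\<lambda>_. vbar) (fst \<omega>) (snd \<omega>) \<le> \<rho> * real T"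
    by (rule eventually_mono) (use \<beta>(1) assms(1) in \<open>simp add: budget_feasible_def\<close>)
  moreover have "integrable ?\<Omega> (\<lambda>\<omega>. payment \<beta> T (\<lambda>_. vbar) (fst \<omega>) (snd \<omega>))"
    and "(\<integral>\<omega>. payment \<beta> T (\<lambda>_. vbar) (fst \<omega>) (snd \<omega>) \<partial>?\<Omega>) = vbar * (1 - q) * N"
    using E(2) by (simp_all add: has_bochner_integral_iff)
  ultimately have "vbar * (1 - q) * N \<le> \<rho> * real T"
    using integral_le_const by metis
  then have "vbar * N \<le> \<rho> * real T / (1 - q)"
    using assms(4) by (simp add: pos_le_divide_eq mult_ac)
  then have budget: "vbar * q * N \<le> q * (\<rho> * real T / (1 - q))"
    using mult_left_mono[OF _ assms(3)] by (metis mult.commute mult.left_commute)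
  have "objective \<rho> \<mu> \<beta> Gam T (\<lambda>_. vbar) ?G = (vbar * q * N - \<mu> * (vbar * q * real T)) / real T"
    unfolding objective_def
    using has_bochner_integral_integral_eq[OF has_bochner_integral_diff[OF E(1) has_bochner_integral_mult_right[OF E(3)]]]
    by simp
  also have "\<dots> \<le> (q * (\<rho> * real T / (1 - q)) - \<mu> * (vbar * q * real T)) / real T"
    using budget by (intro divide_right_mono) auto
  also have "\<dots> = q * (\<rho> / (1 - q) - \<mu> * vbar)"
    using assms(4,5) by (simp add: field_simps)
  finally show ?thesis .
qed

lemma worst_case_le_objective:
  assumes "vbar \<ge> 0" "\<rho> \<ge> 0" "\<mu> \<ge> 0" "prob_space (Gam T)"
    and "\<forall>t<T. v t \<in> {0..vbar}" "distr_on vbar G"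
  shows "worst_case vbar \<rho> \<mu> \<beta> Gam T \<le> objective \<rho> \<mu> \<beta> Gam T v G"
proof -
  let ?A = "{(v, G). (\<forall>t<T. v t \<in> {0..vbar}) \<and> distr_on vbar G}"
  let ?f = "\<lambda>vG. objective \<rho> \<mu> \<beta> Gam T (fst vG) (snd vG)"
  \<comment> \<open>Without this bound the infimum of a set of reals would be an unspecified value.\<close>
  have "bdd_below (?f ` ?A)"
    using objective_ge[where Gam = Gam and T = T, OF assms(1-4)]
    by (intro bdd_belowI2[where m = "- (\<mu> * vbar)"]) auto
  from cINF_lower[OF this, of "(v, G)"] show ?thesis
    using assms(5,6) unfolding worst_case_def by simp
qed

lemma exists_budget_slack_probability:
  fixes \<rho> m :: real
  assumes "0 < \<rho>" "\<rho> < m"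
  obtains q where "0 < q" "q < 1" "\<rho> / (1 - q) < m"
proof
  let ?q = "(m - \<rho>) / (2 * m)"
  show "0 < ?q" "?q < 1"
    using assms by (simp_all add: divide_less_eq)
  have "1 - ?q = (m + \<rho>) / (2 * m)"
    using assms by (simp add: field_simps)
  then show "\<rho> / (1 - ?q) < m"
    using assms by (simp add: field_simps)
qed

theorem theorem2:
  fixes vbar \<rho> \<mu> :: real and \<beta> :: strategy and Gam :: "nat \<Rightarrow> real measure"
  assumes "vbar > 0" and "\<rho> > 0" and "\<rho> \<le> vbar"
    and "\<forall>T. prob_space (Gam T) \<and> sets (Gam T) = sets borel"
    and "budget_feasible vbar \<rho> \<beta>"
    and "measurable_strategy \<beta> Gam"
    and "\<mu> > \<rho> / vbar"
  shows "liminf (\<lambda>T. ereal (worst_case vbar \<rho> \<mu> \<beta> Gam T)) < 0"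
proof -
  have "\<rho> < \<mu> * vbar"
    using assms(1,7) by (simp add: pos_divide_less_eq)
  then obtain q where q: "0 < q" "q < 1" "\<rho> / (1 - q) < \<mu> * vbar"
    using exists_budget_slack_probability assms(2) by blast
  have \<mu>: "\<mu> \<ge> 0"
    using assms(7) divide_pos_pos[OF assms(2,1)] by linarith
  define c where "c = q * (\<mu> * vbar - \<rho> / (1 - q))"
  have "worst_case vbar \<rho> \<mu> \<beta> Gam T \<le> - c" if "T > 0" for T
  proof -
    have "worst_case vbar \<rho> \<mu> \<beta> Gam T \<le> objective \<rho> \<mu> \<beta> Gam T (\<lambda>_. vbar) (two_point_prices q vbar)"
      using assms(1,2,4) \<mu> distr_on_two_point_prices by (intro worst_case_le_objective) auto
    also have "\<dots> \<le> - c"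
      using objective_const_two_point_le[of vbar \<rho> q T Gam \<beta> \<mu>] assms(1,2,4-6) q that
      by (simp add: c_def algebra_simps)
    finally show ?thesis .
  qed
  then have "liminf (\<lambda>T. ereal (worst_case vbar \<rho> \<mu> \<beta> Gam T)) \<le> ereal (- c)"
    by (intro Liminf_le) (auto simp: eventually_sequentially intro: exI[of _ 1])
  also have "ereal (- c) < 0"
    using q by (simp add: c_def)
  finally show ?thesis .
qed

end
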